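(* Let $R$ be a discrete $\Gamma$-ring and $w\in R[2]$ a formal sum law in $R$. For every $k\ge1$ and every pointed map $f:[2^k]\to[2^{k-1}]$ such that $f(1_{2^k})=1_{2^{k-1}}$ in $H\mathbb{N}[2^{k-1}]$ (i.e. $f$ maps exactly $2^{k-1}$ elements of $\{1,\dots,2^k\}$ bijectively onto $\{1,\dots,2^{k-1}\}$ and the rest to $0$), one has $f(w^k)=w^{k-1}$ in $R[2^{k-1}]$.
   Context: Let $[n]=\{0,1,\dots,n\}$, pointed at $0$. A $\Gamma$-space is a functor $F$ from finite pointed sets $[n]$ and pointed maps to pointed simplicial sets with $F[0]$ a point; for a pointed map $f$ we write $f$ also for $F(f)$. $\Sigma_n$ acts on $F[n]$ via permutations of $\{1,\dots,n\}$. We identify $[n]\wedge[m]$ with $[nm]$ via $i\wedge j\mapsto (j-1)n+i$. A $\Gamma$-ring is a $\Gamma$-space $R$ with unit $1\in R[1]$ and an associative unital multiplication given by natural maps $R(K)\wedge R(L)\to R(K\wedge L)$, $p\wedge q\mapsto pq$; it is discrete if all $R(K)$ are sets. For $w\in R[2]$, $w^k\in R[2^k]$ is the $k$-fold product. $p^n_i:[n]\to[n-1]$ is given by $p^n_i(j)=j$ for $j<i$, $p^n_i(i)=0$, $p^n_i(j)=j-1$ for $j>i$. $H\mathbb{N}[k]=\mathbb{N}^k$ (reduced free commutative monoid on $[k]$, pointed maps act by summing coefficients along fibres), and $1_n=(1,\dots,1)\in H\mathbb{N}[n]$. A formal sum law in $R$ is $w\in R[2]$ with $p^2_1(w)=p^2_2(w)=1$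 and with $w^k$ fixed by $\Sigma_{2^k}$ for all $k\ge1$. *)

theory Defs
  imports "HOL-Combinatorics.Permutations"
begin

text \<open>Finite pointed sets are [n] = {0,...,n} with basepoint 0; a pointed map
  [m] -> [n] is represented by a function nat => nat, only its values on {0..m} matter.\<close>

definition pmap :: "nat \<Rightarrow> nat \<Rightarrow> (nat \<Rightarrow> nat) \<Rightarrow> bool" where
  "pmap m n f \<longleftrightarrow> f 0 = 0 \<and> (\<forall>i\<le>m. f i \<le> n)"

text \<open>The map f smash g : [m]^[n] -> [m']^[n'] under the identification
  [m]^[n] = [mn], i^j |-> (j-1)m + i.\<close>

definition smash_map :: "nat \<Rightarrow> nat \<Rightarrow> (nat \<Rightarrow> nat) \<Rightarrow> (nat \<Rightarrow> nat) \<Rightarrow> nat \<Rightarrow> nat" where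
  "smash_map m m' f g k =
     (if k = 0 then 0 else
      (let i = (k - 1) mod m + 1; j = (k - 1) div m + 1 in
       if f i = 0 \<or> g j = 0 then 0 else (g j - 1) * m' + f i))"

text \<open>A discrete Gamma-ring: X n is the pointed set R[n] with basepoint bp n,
  act m n f is R(f) : R[m] -> R[n], mul m n is R[m] ^ R[n] -> R[mn], one is the unit.\<close>

definition discrete_gamma_ring ::
  "(nat \<Rightarrow> 'a set) \<Rightarrow> (nat \<Rightarrow> 'a) \<Rightarrow> (nat \<Rightarrow> nat \<Rightarrow> (nat \<Rightarrow> nat) \<Rightarrow> 'a \<Rightarrow> 'a)
    \<Rightarrow> (nat \<Rightarrow> nat \<Rightarrow> 'a \<Rightarrow> 'a \<Rightarrow> 'a) \<Rightarrow> 'a \<Rightarrow> bool" where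
  "discrete_gamma_ring X bp act mul one \<longleftrightarrow>
     (\<forall>n. bp n \<in> X n) \<and> X 0 = {bp 0} \<and>
     (\<forall>m n f x. pmap m n f \<and> x \<in> X m \<longrightarrow> act m n f x \<in> X n) \<and>
     (\<forall>m n f. pmap m n f \<longrightarrow> act m n f (bp m) = bp n) \<and>
     (\<forall>m n f g x. pmap m n f \<and> (\<forall>i\<le>m. f i = g i) \<and> x \<in> X m
        \<longrightarrow> act m n f x = act m n g x) \<and>
     (\<forall>n x. x \<in> X n \<longrightarrow> act n n id x = x) \<and>
     (\<forall>l m n f g x. pmap l m f \<and> pmap m n g \<and> x \<in> X l
        \<longrightarrow> act m n g (act l m f x) = act l n (g \<circ> f) x) \<and>
     (\<forall>m n p q. p \<in> X m \<and> q \<in> X n \<longrightarrow> mul m n p q \<in> X (m * n)) \<and>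
     (\<forall>m n q. q \<in> X n \<longrightarrow> mul m n (bp m) q = bp (m * n)) \<and>
     (\<forall>m n p. p \<in> X m \<longrightarrow> mul m n p (bp n) = bp (m * n)) \<and>
     (\<forall>m m' n n' f g p q. pmap m m' f \<and> pmap n n' g \<and> p \<in> X m \<and> q \<in> X n \<longrightarrow>
        mul m' n' (act m m' f p) (act n n' g q)
          = act (m * n) (m' * n') (smash_map m m' f g) (mul m n p q)) \<and>
     one \<in> X 1 \<and>
     (\<forall>n q. q \<in> X n \<longrightarrow> mul 1 n one q = q) \<and>
     (\<forall>n p. p \<in> X n \<longrightarrow> mul n 1 p one = p) \<and>
     (\<forall>l m n p q r. p \<in> X l \<and> q \<in> X m \<and> r \<in> X n \<longrightarrow>
        mul (l * m) n (mul l m p q) r = mul l (m * n) p (mul m n q r))"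

fun wpow :: "(nat \<Rightarrow> nat \<Rightarrow> 'a \<Rightarrow> 'a \<Rightarrow> 'a) \<Rightarrow> 'a \<Rightarrow> 'a \<Rightarrow> nat \<Rightarrow> 'a" where
  "wpow mul one w 0 = one"
| "wpow mul one w (Suc k) = mul (2 ^ k) 2 (wpow mul one w k) w"

definition proj :: "nat \<Rightarrow> nat \<Rightarrow> nat \<Rightarrow> nat" where
  "proj n i j = (if j < i then j else if j = i then 0 else j - 1)"

definition formal_sum_law ::
  "(nat \<Rightarrow> 'a set) \<Rightarrow> (nat \<Rightarrow> nat \<Rightarrow> (nat \<Rightarrow> nat) \<Rightarrow> 'a \<Rightarrow> 'a)
    \<Rightarrow> (nat \<Rightarrow> nat \<Rightarrow> 'a \<Rightarrow> 'a \<Rightarrow> 'a) \<Rightarrow> 'a \<Rightarrow> 'a \<Rightarrow> bool" where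
  "formal_sum_law X act mul one w \<longleftrightarrow>
     w \<in> X 2 \<and> act 2 1 (proj 2 1) w = one \<and> act 2 1 (proj 2 2) w = one \<and>
     (\<forall>k\<ge>1. \<forall>\<sigma>. \<sigma> permutes {1..2 ^ k} \<longrightarrow>
        act (2 ^ k) (2 ^ k) \<sigma> (wpow mul one w k) = wpow mul one w k)"

text \<open>HN: HN[n] = N^n, elements represented as functions on {1..n} (zero elsewhere);
  a pointed map acts by summing coefficients along fibres.\<close>

definition hn_map :: "nat \<Rightarrow> nat \<Rightarrow> (nat \<Rightarrow> nat) \<Rightarrow> (nat \<Rightarrow> nat) \<Rightarrow> nat \<Rightarrow> nat" where
  "hn_map m n f v j = (if 1 \<le> j \<and> j \<le> n then (\<Sum>i\<in>{i\<in>{1..m}. f i = j}. v i) else 0)"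

definition hn_ones :: "nat \<Rightarrow> nat \<Rightarrow> nat" where
  "hn_ones n j = (if 1 \<le> j \<and> j \<le> n then 1 else 0)"

end

theory Submission imports Defs begin

(* Write N = 2^(k-1), so 2^k = N*2, and let cut_N : [N*2] -> [N] be the
   pointed map fixing 1..N and sending N+1..N*2 to the basepoint.
   (1) Combinatorics: the fibre condition f(1_{N*2}) = 1_N says f maps the set of indices
       it does not send to 0 bijectively onto {1..N}; extending this bijection by any
       bijection of the remaining indices onto {N+1..N*2} gives a permutation sigma of
       {1..N*2} with f = cut_N o sigma on [N*2].
   (2) Gamma-ring algebra: under [N] ^ [2] = [N*2], cut_N is the smash id ^ p^2_2, so by
       naturality of the product, cut_N(p * w) = id(p) * p^2_2(w) = p * 1 = p.
   The theorem follows: f(w^k) = cut_N(sigma(w^k)) = cut_N(w^k) = cut_N(w^(k-1) * w) = w^(k-1),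
   where sigma(w^k) = w^k is the symmetry part of the definition of a formal sum law. *)

context
  fixes X :: "nat \<Rightarrow> 'a set" and bp :: "nat \<Rightarrow> 'a"
    and act :: "nat \<Rightarrow> nat \<Rightarrow> (nat \<Rightarrow> nat) \<Rightarrow> 'a \<Rightarrow> 'a"
    and mul :: "nat \<Rightarrow> nat \<Rightarrow> 'a \<Rightarrow> 'a \<Rightarrow> 'a" and one :: 'a
  assumes R: "discrete_gamma_ring X bp act mul one"
begin

lemma gamma_one_closed: "one \<in> X 1"
  using R unfolding discrete_gamma_ring_def by meson

lemma gamma_mul_closed: "p \<in> X m \<Longrightarrow> q \<in> X n \<Longrightarrow> mul m n p q \<in> X (m * n)"
  using R unfolding discrete_gamma_ring_def by meson

lemma gamma_act_cong:
  "pmap m n f \<Longrightarrow> (\<And>i. i \<le> m \<Longrightarrow> f i = g i) \<Longrightarrow> x \<in> X m \<Longrightarrow> act m n f x = act m n g x"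
  using R unfolding discrete_gamma_ring_def by meson

lemma gamma_act_id: "x \<in> X n \<Longrightarrow> act n n id x = x"
  using R unfolding discrete_gamma_ring_def by meson

lemma gamma_act_comp:
  "pmap l m f \<Longrightarrow> pmap m n g \<Longrightarrow> x \<in> X l \<Longrightarrow> act m n g (act l m f x) = act l n (g \<circ> f) x"
  using R unfolding discrete_gamma_ring_def by meson

lemma gamma_mul_natural:
  "pmap m m' f \<Longrightarrow> pmap n n' g \<Longrightarrow> p \<in> X m \<Longrightarrow> q \<in> X n \<Longrightarrow>
     mul m' n' (act m m' f p) (act n n' g q) = act (m * n) (m' * n') (smash_map m m' f g) (mul m n p q)"
  using R unfolding discrete_gamma_ring_def by meson

lemma gamma_mul_one_right: "p \<in> X n \<Longrightarrow> mul n 1 p one = p"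
  using R unfolding discrete_gamma_ring_def by meson

lemma wpow_closed:
  assumes w: "w \<in> X 2"
  shows "wpow mul one w n \<in> X (2 ^ n)"
proof (induction n)
  case 0
  show ?case using gamma_one_closed by simp
next
  case (Suc n)
  show ?case using gamma_mul_closed[OF Suc w] by (simp add: mult.commute)
qed

end

definition cut :: "nat \<Rightarrow> nat \<Rightarrow> nat" where
  "cut N i = (if i \<le> N then i else 0)"

lemma pmap_cut: "pmap M N (cut N)"
  by (simp add: pmap_def cut_def)

lemma smash_id_proj_eq_cut:
  assumes "0 < N" and "i \<le> N * 2"
  shows "smash_map N N id (proj 2 2) i = cut N i"
proof -
  consider "i = 0" | "1 \<le> i" "i \<le> N" | "N < i"
    by linarith
  then show ?thesis
  proof cases
    case 1
    then show ?thesis by (simp add: smash_map_def cut_def)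
  next
    case 2
    then have "(i - 1) div N = 0" and "(i - 1) mod N = i - 1" by simp_all
    then show ?thesis using 2 by (simp add: smash_map_def proj_def cut_def Let_def)
  next
    case 3
    then have "(i - 1) div N = 1"
      using assms by (intro div_nat_eqI) simp_all
    then show ?thesis using 3 by (simp add: smash_map_def proj_def cut_def Let_def)
  qed
qed

text \<open>Collapsing the upper half removes the last factor w of a product p * w, because
  p^2_2(w) = 1.  This is where the counit condition of a formal sum law enters.\<close>

lemma cut_mul_counit:
  assumes R: "discrete_gamma_ring X bp act mul one"
    and p: "p \<in> X N" and w: "w \<in> X 2" and counit: "act 2 1 (proj 2 2) w = one"
    and N: "0 < N"
  shows "act (N * 2) N (cut N) (mul N 2 p w) = p"
proof -
  have "act (N * 2) N (cut N) (mul N 2 p w)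
        = act (N * 2) (N * 1) (smash_map N N id (proj 2 2)) (mul N 2 p w)"
    unfolding mult_1_right
    by (rule gamma_act_cong[OF R pmap_cut _ gamma_mul_closed[OF R p w]])
      (simp add: smash_id_proj_eq_cut[OF N])
  also have "\<dots> = mul N 1 (act N N id p) (act 2 1 (proj 2 2) w)"
    by (rule gamma_mul_natural[OF R _ _ p w, symmetric]) (simp_all add: pmap_def proj_def)
  also have "\<dots> = p"
    using gamma_act_id[OF R p] gamma_mul_one_right[OF R p] counit by simp
  finally show ?thesis .
qed

text \<open>The fibre condition f(1_M) = 1_N says every j in 1..N has exactly one preimage in 1..M,
  i.e. f restricts to a bijection from its support onto 1..N.\<close>

lemma fibre_condition_bij:
  assumes pm: "pmap M N f" and hn: "hn_map M N f (hn_ones M) = hn_ones N"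
  shows "bij_betw f {i \<in> {1..M}. f i \<noteq> 0} {1..N}"
proof -
  have fibre: "\<exists>z. {i \<in> {1..M}. f i = j} = {z}" if j: "j \<in> {1..N}" for j
  proof -
    have "card {i \<in> {1..M}. f i = j} = hn_map M N f (hn_ones M) j"
      using j by (simp add: hn_map_def hn_ones_def)
    also have "\<dots> = 1" using hn j by (simp add: hn_ones_def)
    finally show ?thesis by (meson card_1_singletonE)
  qed
  have into: "f i \<in> {1..N}" if "i \<in> {1..M}" "f i \<noteq> 0" for i
    using that pm by (auto simp: pmap_def)
  show ?thesis
  proof (rule bij_betw_imageI)
    show "inj_on f {i \<in> {1..M}. f i \<noteq> 0}"
    proof (rule inj_onI)
      fix x y assume x: "x \<in> {i \<in> {1..M}. f i \<noteq> 0}" and y: "y \<in> {i \<in> {1..M}. f i \<noteq> 0}"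
        and "f x = f y"
      then have "x \<in> {i \<in> {1..M}. f i = f x}" and "y \<in> {i \<in> {1..M}. f i = f x}" by auto
      moreover obtain z where "{i \<in> {1..M}. f i = f x} = {z}" using fibre into x by blast
      ultimately show "x = y" by (metis singletonD)
    qed
    show "f ` {i \<in> {1..M}. f i \<noteq> 0} = {1..N}"
    proof
      show "f ` {i \<in> {1..M}. f i \<noteq> 0} \<subseteq> {1..N}" using into by auto
      show "{1..N} \<subseteq> f ` {i \<in> {1..M}. f i \<noteq> 0}"
      proof
        fix j assume j: "j \<in> {1..N}"
        then obtain z where "{i \<in> {1..M}. f i = j} = {z}" using fibre by blast
        then have "z \<in> {1..M}" and "f z = j" by auto
        then show "j \<in> f ` {i \<in> {1..M}. f i \<noteq> 0}" using j by force
      qed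
    qed
  qed
qed

text \<open>Hence f = cut_N o sigma on [M] for a permutation sigma of {1..M}: extend the bijection
  of the support onto {1..N} by a bijection of the complement onto {N+1..M}.\<close>

lemma fibre_condition_factors_through_permutation:
  assumes pm: "pmap M N f" and hn: "hn_map M N f (hn_ones M) = hn_ones N"
  obtains \<sigma> where "\<sigma> permutes {1..M}" and "\<And>i. i \<le> M \<Longrightarrow> f i = cut N (\<sigma> i)"
proof -
  define A where "A = {i \<in> {1..M}. f i \<noteq> 0}"
  define B where "B = {1..M} - A"
  have bijA: "bij_betw f A {1..N}"
    unfolding A_def by (rule fibre_condition_bij[OF pm hn])
  have AM: "A \<subseteq> {1..M}" by (auto simp: A_def)
  have "N \<le> M"
    using bij_betw_same_card[OF bijA] card_mono[OF _ AM] by simp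
  have "card B = card {N+1..M}"
    using bij_betw_same_card[OF bijA] AM by (simp add: B_def card_Diff_subset finite_subset)
  then obtain h where bijB: "bij_betw h B {N+1..M}"
    using finite_same_card_bij by (metis B_def finite_Diff finite_atLeastAtMost)
  define \<sigma> where "\<sigma> i = (if i \<in> A then f i else if i \<in> B then h i else i)" for i
  have "bij_betw \<sigma> (A \<union> B) ({1..N} \<union> {N+1..M})"
  proof (rule bij_betw_combine)
    show "bij_betw \<sigma> A {1..N}"
      using bijA by (rule bij_betw_cong[THEN iffD1, rotated]) (simp add: \<sigma>_def)
    show "bij_betw \<sigma> B {N+1..M}"
      using bijB by (rule bij_betw_cong[THEN iffD1, rotated]) (auto simp: \<sigma>_def B_def)
  qed auto
  moreover have "A \<union> B = {1..M}" and "{1..N} \<union> {N+1..M} = {1..M}"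
    using AM \<open>N \<le> M\<close> by (auto simp: B_def)
  ultimately have "\<sigma> permutes {1..M}"
    by (intro bij_imp_permutes) (auto simp: \<sigma>_def B_def A_def)
  moreover have "f i = cut N (\<sigma> i)" if i: "i \<le> M" for i
  proof -
    consider "i = 0" | "i \<in> A" | "i \<in> B" using i by (force simp: A_def B_def)
    then show ?thesis
    proof cases
      case 1 then show ?thesis using pm by (simp add: pmap_def \<sigma>_def A_def B_def cut_def)
    next
      case 2 then show ?thesis using bijA by (auto simp: \<sigma>_def cut_def bij_betw_def)
    next
      case 3
      then have "h i \<in> {N+1..M}" using bijB by (auto simp: bij_betw_def)
      then show ?thesis using 3 by (auto simp: \<sigma>_def cut_def B_def A_def)
    qed
  qed
  ultimately show ?thesis using that by blast
qed

theorem lemma2p2p1: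
  fixes X :: "nat \<Rightarrow> 'a set" and bp :: "nat \<Rightarrow> 'a"
    and act :: "nat \<Rightarrow> nat \<Rightarrow> (nat \<Rightarrow> nat) \<Rightarrow> 'a \<Rightarrow> 'a"
    and mul :: "nat \<Rightarrow> nat \<Rightarrow> 'a \<Rightarrow> 'a \<Rightarrow> 'a" and one w :: 'a
    and k :: nat and f :: "nat \<Rightarrow> nat"
  assumes "discrete_gamma_ring X bp act mul one"
    and "formal_sum_law X act mul one w"
    and "k \<ge> 1"
    and "pmap (2 ^ k) (2 ^ (k - 1)) f"
    and "hn_map (2 ^ k) (2 ^ (k - 1)) f (hn_ones (2 ^ k)) = hn_ones (2 ^ (k - 1))"
  shows "act (2 ^ k) (2 ^ (k - 1)) f (wpow mul one w k) = wpow mul one w (k - 1)"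
proof -
  note R = assms(1)
  obtain m where k: "k = Suc m" using assms(3) by (cases k) auto
  define N :: nat where "N = 2 ^ m"
  have sizes: "2 ^ k = N * 2" "2 ^ (k - 1) = N" by (simp_all add: k N_def)
  have w: "w \<in> X 2" and counit: "act 2 1 (proj 2 2) w = one"
    and symm: "\<And>\<sigma>. \<sigma> permutes {1..N * 2} \<Longrightarrow> act (N * 2) (N * 2) \<sigma> (wpow mul one w k) = wpow mul one w k"
    using assms(2,3) sizes by (auto simp: formal_sum_law_def)
  have wk: "wpow mul one w k \<in> X (N * 2)" using wpow_closed[OF R w, of k] sizes by simp
  obtain \<sigma> where \<sigma>: "\<sigma> permutes {1..N * 2}" and f: "\<And>i. i \<le> N * 2 \<Longrightarrow> f i = cut N (\<sigma> i)"
    using fibre_condition_factors_through_permutation assms(4,5) sizes by metis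
  have p\<sigma>: "pmap (N * 2) (N * 2) \<sigma>"
    using \<sigma> by (simp add: pmap_def permutes_not_in)
      (metis atLeastAtMost_iff not_one_le_zero permutes_in_image permutes_not_in)
  have pf: "pmap (N * 2) N f" using assms(4) unfolding sizes .
  have "act (N * 2) N f (wpow mul one w k) = act (N * 2) N (cut N \<circ> \<sigma>) (wpow mul one w k)"
    by (rule gamma_act_cong[OF R pf _ wk]) (simp add: f)
  also have "\<dots> = act (N * 2) N (cut N) (act (N * 2) (N * 2) \<sigma> (wpow mul one w k))"
    by (rule gamma_act_comp[OF R p\<sigma> pmap_cut wk, symmetric])
  also have "\<dots> = act (N * 2) N (cut N) (mul N 2 (wpow mul one w m) w)"
    unfolding symm[OF \<sigma>] by (simp add: k N_def)
  also have "\<dots> = wpow mul one w m"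
    by (rule cut_mul_counit[OF R _ w counit]) (simp_all add: N_def wpow_closed[OF R w])
  finally have "act (N * 2) N f (wpow mul one w k) = wpow mul one w m" .
  moreover have "k - 1 = m" using k by simp
  ultimately show ?thesis unfolding sizes by simp
qed

end
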